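(* Let $\gamma\in(1,2]$, $\delta>0$, $L>0$. Assume that $f$ is convex and $L$-smooth relative to $d$ on $Q$, that $V$ satisfies the triangular scaling property with scaling factor $\gamma$, and that for every $y\in Q$ the pair $(f_\delta(y),\nabla f_\delta(y))$ is a $(\delta,L)$-oracle of $f$ at $y$. Then the sequences $\{\theta_k\},\{x_k\},\{z_k\}$ generated by Algorithm AccBPGM-1 satisfy, for every $k\ge0$ and every $x\in Q$, $$\frac{1}{\theta_k^{\gamma}}\big(f(x_{k+1})-f(x)\big)+LV(x,z_{k+1})\le\frac{1-\theta_k}{\theta_k^{\gamma}}\big(f(x_k)-f(x)\big)+LV(x,z_k)+\frac{\delta}{\theta_k^{\gamma}}.$$
   Context: Setting. $\mathbb{E}$ is a finite-dimensional real vector space with a norm $\|\cdot\|$ and dual space $\mathbb{E}^*$; $\langle g,x\rangle$ denotes the value of $g\in\mathbb{E}^*$ at $x\in\mathbb{E}$. $Q\subset\mathbb{E}$ is a closed convex set. $f:Q\to\mathbb{R}$ is convex and differentiable on an open set containing the relative interior $\mathrm{rint}\,Q$. The prox-function $d:Q\to\mathbb{R}$ is continuously differentiable and $1$-strongly convex with respect to $\|\cdot\|$. The Bregman divergence is $V(x,y)=d(x)-d(y)-\langle\nabla d(y),x-y\rangle$. All minimization subproblems appearing in the algorithms are assumed to have minimizers. Relative smoothness: $f$ is $L$-smooth relative to $d$ on $Q$ if $f(y)\le f(x)+\langle\nabla f(x),y-x\rangle+LV(y,x)$ for all $x\in\mathrm{rint}\,Q$, $y\in Q$. Triangular scaling property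 with factor $\gamma>0$: $V((1-\theta)x+\theta z,(1-\theta)x+\theta\tilde z)\le\theta^{\gamma}V(z,\tilde z)$ for all $x,z,\tilde z\in Q$ and all $\theta\in[0,1]$. $(\delta,L)$-oracle: a pair $(f_\delta(y),\nabla f_\delta(y))\in\mathbb{R}\times\mathbb{E}^*$ is a $(\delta,L)$-oracle of $f$ at $y$ if $0\le f(x)-\big(f_\delta(y)+\langle\nabla f_\delta(y),x-y\rangle\big)\le LV(x,y)+\delta$ for all $x\in Q$. Notation: $g(x|y):=f_\delta(y)+\langle\nabla f_\delta(y),x-y\rangle$. Algorithm AccBPGM-1. Input: $x_0\in\mathrm{rint}\,Q$, $\gamma\in(1,2]$, $\delta>0$, $L>0$. Set $z_0=x_0$, $\theta_0=1$. For $k=0,1,2,\dots$: $y_k=(1-\theta_k)x_k+\theta_kz_k$; $z_{k+1}=\arg\min_{z\in Q}\{g(z|y_k)+\theta_k^{\gamma-1}LV(z,z_k)\}$; $x_{k+1}=(1-\theta_k)x_k+\theta_kz_{k+1}$; choose $\theta_{k+1}\in(0,1]$ with $\frac{1-\theta_{k+1}}{\theta_{k+1}^{\gamma}}\le\frac{1}{\theta_k^{\gamma}}$. *)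

theory Defs
  imports "HOL-Analysis.Analysis"
begin

text \<open>The space E is a finite-dimensional real vector space ('a :: euclidean_space),
  equipped with an arbitrary norm nrm (not necessarily the Euclidean one).
  The dual space E* is modelled as the bounded (= all, in finite dimension)
  linear functionals 'a \<Rightarrow>L real; the pairing is blinfun_apply.\<close>

definition is_norm :: "('a::real_vector \<Rightarrow> real) \<Rightarrow> bool" where
  "is_norm nrm \<longleftrightarrow> (\<forall>x. 0 \<le> nrm x) \<and> (\<forall>x. nrm x = 0 \<longleftrightarrow> x = 0)
     \<and> (\<forall>c x. nrm (c *\<^sub>R x) = \<bar>c\<bar> * nrm x) \<and> (\<forall>x y. nrm (x + y) \<le> nrm x + nrm y)"

definition strongly_convex_on1 :: "('a::real_vector \<Rightarrow> real) \<Rightarrow> 'a set \<Rightarrow> ('a \<Rightarrow> real) \<Rightarrow> bool" where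
  "strongly_convex_on1 nrm Q d \<longleftrightarrow> (\<forall>x\<in>Q. \<forall>y\<in>Q. \<forall>t::real. 0 \<le> t \<longrightarrow> t \<le> 1 \<longrightarrow>
      d (t *\<^sub>R x + (1 - t) *\<^sub>R y) \<le> t * d x + (1 - t) * d y - t * (1 - t) / 2 * (nrm (x - y))\<^sup>2)"

definition bregman :: "('a::real_normed_vector \<Rightarrow> real) \<Rightarrow> ('a \<Rightarrow> ('a \<Rightarrow>\<^sub>L real)) \<Rightarrow> 'a \<Rightarrow> 'a \<Rightarrow> real" where
  "bregman d Dd x y = d x - d y - blinfun_apply (Dd y) (x - y)"

definition rel_smooth :: "('a::euclidean_space \<Rightarrow> real) \<Rightarrow> ('a \<Rightarrow> ('a \<Rightarrow>\<^sub>L real)) \<Rightarrow>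
    ('a \<Rightarrow> real) \<Rightarrow> ('a \<Rightarrow> ('a \<Rightarrow>\<^sub>L real)) \<Rightarrow> 'a set \<Rightarrow> real \<Rightarrow> bool" where
  "rel_smooth f Df d Dd Q L \<longleftrightarrow> (\<forall>x\<in>rel_interior Q. \<forall>y\<in>Q.
      f y \<le> f x + blinfun_apply (Df x) (y - x) + L * bregman d Dd y x)"

definition tri_scaling :: "('a::real_normed_vector \<Rightarrow> real) \<Rightarrow> ('a \<Rightarrow> ('a \<Rightarrow>\<^sub>L real)) \<Rightarrow> 'a set \<Rightarrow> real \<Rightarrow> bool" where
  "tri_scaling d Dd Q \<gamma> \<longleftrightarrow> (\<forall>x\<in>Q. \<forall>z\<in>Q. \<forall>z'\<in>Q. \<forall>\<theta>::real. 0 \<le> \<theta> \<longrightarrow> \<theta> \<le> 1 \<longrightarrow>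
      bregman d Dd ((1 - \<theta>) *\<^sub>R x + \<theta> *\<^sub>R z) ((1 - \<theta>) *\<^sub>R x + \<theta> *\<^sub>R z') \<le> \<theta> powr \<gamma> * bregman d Dd z z')"

definition is_delta_L_orcl :: "('a::real_normed_vector \<Rightarrow> real) \<Rightarrow> ('a \<Rightarrow> real) \<Rightarrow> ('a \<Rightarrow> ('a \<Rightarrow>\<^sub>L real)) \<Rightarrow>
    'a set \<Rightarrow> real \<Rightarrow> real \<Rightarrow> real \<Rightarrow> ('a \<Rightarrow>\<^sub>L real) \<Rightarrow> 'a \<Rightarrow> bool" where
  "is_delta_L_orcl f d Dd Q \<delta> L fy gy y \<longleftrightarrow> (\<forall>x\<in>Q.
      0 \<le> f x - (fy + blinfun_apply gy (x - y)) \<and>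
      f x - (fy + blinfun_apply gy (x - y)) \<le> L * bregman d Dd x y + \<delta>)"

definition AccBPGM1 :: "('a::real_normed_vector \<Rightarrow> real) \<Rightarrow> ('a \<Rightarrow> ('a \<Rightarrow>\<^sub>L real)) \<Rightarrow> 'a set \<Rightarrow>
    ('a \<Rightarrow> real) \<Rightarrow> ('a \<Rightarrow> ('a \<Rightarrow>\<^sub>L real)) \<Rightarrow> real \<Rightarrow> real \<Rightarrow>
    (nat \<Rightarrow> real) \<Rightarrow> (nat \<Rightarrow> 'a) \<Rightarrow> (nat \<Rightarrow> 'a) \<Rightarrow> (nat \<Rightarrow> 'a) \<Rightarrow> bool" where
  "AccBPGM1 d Dd Q fd gd \<gamma> L \<theta> x y z \<longleftrightarrow>
     x 0 \<in> rel_interior Q \<and> z 0 = x 0 \<and> \<theta> 0 = 1 \<and>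
     (\<forall>k. y k = (1 - \<theta> k) *\<^sub>R x k + \<theta> k *\<^sub>R z k
        \<and> z (Suc k) \<in> Q
        \<and> (\<forall>w\<in>Q. fd (y k) + blinfun_apply (gd (y k)) (z (Suc k) - y k)
                    + \<theta> k powr (\<gamma> - 1) * L * bregman d Dd (z (Suc k)) (z k)
                 \<le> fd (y k) + blinfun_apply (gd (y k)) (w - y k)
                    + \<theta> k powr (\<gamma> - 1) * L * bregman d Dd w (z k))
        \<and> x (Suc k) = (1 - \<theta> k) *\<^sub>R x k + \<theta> k *\<^sub>R z (Suc k)
        \<and> 0 < \<theta> (Suc k) \<and> \<theta> (Suc k) \<le> 1
        \<and> (1 - \<theta> (Suc k)) / \<theta> (Suc k) powr \<gamma> \<le> 1 / \<theta> k powr \<gamma>)"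

end

theory Submission
  imports Defs
begin

text \<open>The prox step minimises a linear function plus \<open>c V(\<cdot>, z\<^sub>k)\<close>, \<open>c = \<theta>\<^sub>k\<^sup>\<gamma>\<^sup>-\<^sup>1 L\<close>,
  over the convex set Q. Its first-order optimality condition and the three-point identity
  for Bregman divergences bound the oracle model at \<open>z\<^sub>k\<^sub>+\<^sub>1\<close> (plus \<open>c V(z\<^sub>k\<^sub>+\<^sub>1, z\<^sub>k)\<close>) by
  the model at any \<open>w \<in> Q\<close> plus \<open>c (V(w, z\<^sub>k) - V(w, z\<^sub>k\<^sub>+\<^sub>1))\<close>. In the upper oracle bound
  at \<open>x\<^sub>k\<^sub>+\<^sub>1 = (1 - \<theta>\<^sub>k) x\<^sub>k + \<theta>\<^sub>k z\<^sub>k\<^sub>+\<^sub>1\<close> the model is affine, and triangular scaling turns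
  \<open>V(x\<^sub>k\<^sub>+\<^sub>1, y\<^sub>k)\<close> into \<open>\<theta>\<^sub>k\<^sup>\<gamma> V(z\<^sub>k\<^sub>+\<^sub>1, z\<^sub>k) = \<theta>\<^sub>k c V(z\<^sub>k\<^sub>+\<^sub>1, z\<^sub>k)\<close>; the lower oracle
  bounds at \<open>x\<^sub>k\<close> and w then give the one-step estimate, which is divided by \<open>\<theta>\<^sub>k\<^sup>\<gamma>\<close>.
  Convexity and relative smoothness of f are used only through the oracle.\<close>

lemma has_derivative_nonneg_at_convex_minimizer:
  fixes h :: "'a::real_normed_vector \<Rightarrow> real"
  assumes deriv: "(h has_derivative h') (at z)"
    and Q: "convex Q" "z \<in> Q" "w \<in> Q"
    and min: "\<forall>u\<in>Q. h z \<le> h u"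
  shows "0 \<le> h' (w - z)"
proof (rule ccontr)
  assume neg: "\<not> 0 \<le> h' (w - z)"
  have "((\<lambda>t. z + t *\<^sub>R (w - z)) has_derivative (\<lambda>t. t *\<^sub>R (w - z))) (at 0)"
    by (auto intro!: derivative_eq_intros)
  then have "((\<lambda>t. h (z + t *\<^sub>R (w - z))) has_derivative (\<lambda>t. h' (t *\<^sub>R (w - z)))) (at 0)"
    using has_derivative_compose deriv by fastforce
  moreover have "h' (t *\<^sub>R (w - z)) = h' (w - z) * t" for t
    using linear_cmul[OF has_derivative_linear[OF deriv]] by simp
  ultimately have "DERIV (\<lambda>t. h (z + t *\<^sub>R (w - z))) 0 :> h' (w - z)"
    by (simp add: has_field_derivative_def)
  moreover have "h' (w - z) < 0" using neg by simp
  ultimately have "\<exists>e>0. \<forall>t>0. t < e \<longrightarrow> h (z + t *\<^sub>R (w - z)) < h z"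
    using DERIV_neg_dec_right by fastforce
  then obtain e where "e > 0" and dec: "\<forall>t>0. t < e \<longrightarrow> h (z + t *\<^sub>R (w - z)) < h z"
    by blast
  define t where "t = min (e / 2) 1"
  have t: "0 < t" "t < e" "t \<le> 1" using \<open>e > 0\<close> by (auto simp: t_def)
  have "z + t *\<^sub>R (w - z) = (1 - t) *\<^sub>R z + t *\<^sub>R w" by (simp add: algebra_simps)
  then have "z + t *\<^sub>R (w - z) \<in> Q" using convexD[OF Q] t by simp
  then have "h z \<le> h (z + t *\<^sub>R (w - z))" using min by blast
  with dec t show False by auto
qed

lemma bregman_three_point_identity:
  "bregman d Dd w v = bregman d Dd w z + bregman d Dd z v
     + blinfun_apply (Dd z) (w - z) - blinfun_apply (Dd v) (w - z)"
  by (simp add: bregman_def blinfun.diff_right)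

lemma bregman_has_derivative_left:
  assumes "(d has_derivative blinfun_apply (Dd z)) (at z)"
  shows "((\<lambda>u. bregman d Dd u v) has_derivative
           (\<lambda>h. blinfun_apply (Dd z) h - blinfun_apply (Dd v) h)) (at z)"
  unfolding bregman_def
  by (auto intro!: derivative_eq_intros assms simp: blinfun.diff_right)

lemma bregman_prox_three_point:
  assumes d: "(d has_derivative blinfun_apply (Dd z)) (at z)"
    and Q: "convex Q" "z \<in> Q" "w \<in> Q"
    and min: "\<forall>u\<in>Q. blinfun_apply G (z - y) + c * bregman d Dd z v
                   \<le> blinfun_apply G (u - y) + c * bregman d Dd u v"
  shows "blinfun_apply G (z - y) + c * bregman d Dd z v + c * bregman d Dd w z
           \<le> blinfun_apply G (w - y) + c * bregman d Dd w v"
proof -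
  have "((\<lambda>u. blinfun_apply G (u - y) + c * bregman d Dd u v) has_derivative
          (\<lambda>h. blinfun_apply G h + c * (blinfun_apply (Dd z) h - blinfun_apply (Dd v) h))) (at z)"
    by (auto intro!: derivative_eq_intros bregman_has_derivative_left[where Dd = Dd, OF d] simp: blinfun.diff_right)
  then have "0 \<le> blinfun_apply G (w - z)
                 + c * (blinfun_apply (Dd z) (w - z) - blinfun_apply (Dd v) (w - z))"
    using has_derivative_nonneg_at_convex_minimizer[OF _ Q] min by blast
  moreover have "blinfun_apply G (w - y) = blinfun_apply G (z - y) + blinfun_apply G (w - z)"
    by (simp add: blinfun.diff_right)
  ultimately show ?thesis
    by (subst bregman_three_point_identity[of d Dd w v z]) (simp add: algebra_simps)
qed

lemma AccBPGM1_step_size: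
  assumes "AccBPGM1 d Dd Q fd gd \<gamma> L \<theta> x y z"
  shows "0 < \<theta> k" "\<theta> k \<le> 1"
  using assms unfolding AccBPGM1_def by (cases k; auto)+

lemma AccBPGM1_iterates_in:
  assumes alg: "AccBPGM1 d Dd Q fd gd \<gamma> L \<theta> x y z" and Q: "convex Q"
  shows "x k \<in> Q" "z k \<in> Q" "y k \<in> Q"
proof -
  have xz: "x k \<in> Q \<and> z k \<in> Q" for k
  proof (induction k)
    case 0
    then show ?case using alg rel_interior_subset unfolding AccBPGM1_def by auto
  next
    case (Suc k)
    then show ?case
      using alg convexD[OF Q, of "x k" "z (Suc k)" "1 - \<theta> k" "\<theta> k"] AccBPGM1_step_size[OF alg, of k]
      unfolding AccBPGM1_def by auto
  qed
  then show "x k \<in> Q" "z k \<in> Q" by auto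
  show "y k \<in> Q"
    using alg xz[of k] convexD[OF Q, of "x k" "z k" "1 - \<theta> k" "\<theta> k"] AccBPGM1_step_size[OF alg, of k]
    unfolding AccBPGM1_def by auto
qed

lemma AccBPGM1_prox_three_point:
  assumes Q: "convex Q"
    and d_diff: "\<forall>u\<in>Q. (d has_derivative blinfun_apply (Dd u)) (at u)"
    and alg: "AccBPGM1 d Dd Q fd gd \<gamma> L \<theta> x y z"
    and w: "w \<in> Q"
  shows "blinfun_apply (gd (y k)) (z (Suc k) - y k)
           + \<theta> k powr (\<gamma> - 1) * L * bregman d Dd (z (Suc k)) (z k)
           + \<theta> k powr (\<gamma> - 1) * L * bregman d Dd w (z (Suc k))
         \<le> blinfun_apply (gd (y k)) (w - y k) + \<theta> k powr (\<gamma> - 1) * L * bregman d Dd w (z k)"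
proof -
  have z: "z (Suc k) \<in> Q"
    using AccBPGM1_iterates_in[OF alg Q] by blast
  have "\<forall>u\<in>Q. fd (y k) + blinfun_apply (gd (y k)) (z (Suc k) - y k)
                 + \<theta> k powr (\<gamma> - 1) * L * bregman d Dd (z (Suc k)) (z k)
              \<le> fd (y k) + blinfun_apply (gd (y k)) (u - y k)
                 + \<theta> k powr (\<gamma> - 1) * L * bregman d Dd u (z k)"
    using alg unfolding AccBPGM1_def by blast
  then have "\<forall>u\<in>Q. blinfun_apply (gd (y k)) (z (Suc k) - y k)
                    + \<theta> k powr (\<gamma> - 1) * L * bregman d Dd (z (Suc k)) (z k)
                 \<le> blinfun_apply (gd (y k)) (u - y k) + \<theta> k powr (\<gamma> - 1) * L * bregman d Dd u (z k)"
    by simp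
  then show ?thesis
    using bregman_prox_three_point[where Dd = Dd, OF _ Q z w] d_diff z by blast
qed

lemma AccBPGM1_one_step_descent:
  assumes Q: "convex Q"
    and d_diff: "\<forall>u\<in>Q. (d has_derivative blinfun_apply (Dd u)) (at u)"
    and L: "0 \<le> L"
    and scaling: "tri_scaling d Dd Q \<gamma>"
    and orcl: "\<forall>u\<in>Q. is_delta_L_orcl f d Dd Q \<delta> L (fd u) (gd u) u"
    and alg: "AccBPGM1 d Dd Q fd gd \<gamma> L \<theta> x y z"
    and w: "w \<in> Q"
  shows "f (x (Suc k)) - f w \<le> (1 - \<theta> k) * (f (x k) - f w)
           + \<theta> k powr \<gamma> * L * (bregman d Dd w (z k) - bregman d Dd w (z (Suc k))) + \<delta>"
proof -
  let ?B = "bregman d Dd"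
  define t where "t = \<theta> k"
  define c where "c = t powr (\<gamma> - 1) * L"
  define G where "G = gd (y k)"
  define g where "g u = fd (y k) + blinfun_apply G (u - y k)" for u
  have t: "0 < t" "t \<le> 1" using AccBPGM1_step_size[OF alg] by (auto simp: t_def)
  have tc: "t * c = t powr \<gamma> * L"
    using t by (simp add: c_def powr_diff field_simps)
  have in_Q: "x k \<in> Q" "z k \<in> Q" "y k \<in> Q" "x (Suc k) \<in> Q" "z (Suc k) \<in> Q"
    using AccBPGM1_iterates_in[OF alg Q] by auto
  have y: "y k = (1 - t) *\<^sub>R x k + t *\<^sub>R z k"
    and x: "x (Suc k) = (1 - t) *\<^sub>R x k + t *\<^sub>R z (Suc k)"
    using alg unfolding AccBPGM1_def t_def by blast+
  have lower: "g u \<le> f u" if "u \<in> Q" for u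
    using orcl in_Q(3) that unfolding is_delta_L_orcl_def g_def G_def by auto
  have upper: "f (x (Suc k)) \<le> g (x (Suc k)) + L * ?B (x (Suc k)) (y k) + \<delta>"
    using orcl in_Q(3,4) unfolding is_delta_L_orcl_def g_def G_def by fastforce
  have scale: "?B (x (Suc k)) (y k) \<le> t powr \<gamma> * ?B (z (Suc k)) (z k)"
    using scaling in_Q t unfolding tri_scaling_def x y by auto
  have x_minus_y: "x (Suc k) - y k = (1 - t) *\<^sub>R (x k - y k) + t *\<^sub>R (z (Suc k) - y k)"
    unfolding x by (simp add: algebra_simps)
  have model: "g (x (Suc k)) = (1 - t) * g (x k) + t * g (z (Suc k))"
    unfolding g_def x_minus_y
    by (simp add: blinfun.add_right blinfun.scaleR_right) (simp add: algebra_simps)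
  have three_point: "g (z (Suc k)) + c * ?B (z (Suc k)) (z k) + c * ?B w (z (Suc k))
                       \<le> g w + c * ?B w (z k)"
    using AccBPGM1_prox_three_point[OF Q d_diff alg w, of k]
    unfolding g_def G_def c_def t_def by simp
  have prox_bound: "g (z (Suc k)) + c * ?B (z (Suc k)) (z k)
                      \<le> f w + c * ?B w (z k) - c * ?B w (z (Suc k))"
    using three_point lower[OF w] by linarith
  have "L * ?B (x (Suc k)) (y k) \<le> L * (t powr \<gamma> * ?B (z (Suc k)) (z k))"
    using mult_left_mono[OF scale L] .
  also have "\<dots> = t * (c * ?B (z (Suc k)) (z k))"
    by (simp add: tc mult.assoc[symmetric])
  finally have "f (x (Suc k)) \<le> (1 - t) * g (x k) + t * (g (z (Suc k)) + c * ?B (z (Suc k)) (z k)) + \<delta>"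
    using upper model by (simp add: algebra_simps)
  also have "\<dots> \<le> (1 - t) * f (x k) + t * (f w + c * ?B w (z k) - c * ?B w (z (Suc k))) + \<delta>"
    using mult_left_mono[OF lower[OF in_Q(1)], of "1 - t"] mult_left_mono[OF prox_bound, of t] t
    by linarith
  also have "\<dots> = f w + (1 - t) * (f (x k) - f w)
                   + t powr \<gamma> * L * (?B w (z k) - ?B w (z (Suc k))) + \<delta>"
    unfolding tc[symmetric] by (simp add: algebra_simps)
  finally show ?thesis
    unfolding t_def by linarith
qed

theorem lemma5:
  fixes Q :: "'a::euclidean_space set"
    and nrm :: "'a \<Rightarrow> real"
    and f d fd :: "'a \<Rightarrow> real"
    and Df Dd gd :: "'a \<Rightarrow> ('a \<Rightarrow>\<^sub>L real)"
    and \<gamma> \<delta> L :: real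
    and \<theta> :: "nat \<Rightarrow> real"
    and x y z :: "nat \<Rightarrow> 'a"
  assumes norm: "is_norm nrm"
    and Q: "closed Q" "convex Q"
    and f_diff: "\<exists>U. open U \<and> rel_interior Q \<subseteq> U \<and> (\<forall>u\<in>U. (f has_derivative blinfun_apply (Df u)) (at u))"
    and f_convex: "convex_on Q f"
    and d_C1: "\<exists>U. open U \<and> Q \<subseteq> U \<and> (\<forall>u\<in>U. (d has_derivative blinfun_apply (Dd u)) (at u))
                  \<and> continuous_on U Dd"
    and d_sc: "strongly_convex_on1 nrm Q d"
    and \<gamma>: "1 < \<gamma>" "\<gamma> \<le> 2"
    and \<delta>: "0 < \<delta>"
    and L: "0 < L"
    and smooth: "rel_smooth f Df d Dd Q L"
    and scaling: "tri_scaling d Dd Q \<gamma>"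
    and orcl: "\<forall>u\<in>Q. is_delta_L_orcl f d Dd Q \<delta> L (fd u) (gd u) u"
    and alg: "AccBPGM1 d Dd Q fd gd \<gamma> L \<theta> x y z"
  shows "\<forall>k. \<forall>w\<in>Q.
     1 / \<theta> k powr \<gamma> * (f (x (Suc k)) - f w) + L * bregman d Dd w (z (Suc k))
       \<le> (1 - \<theta> k) / \<theta> k powr \<gamma> * (f (x k) - f w) + L * bregman d Dd w (z k) + \<delta> / \<theta> k powr \<gamma>"
proof (intro allI ballI)
  fix k w assume w: "w \<in> Q"
  have d_diff: "\<forall>u\<in>Q. (d has_derivative blinfun_apply (Dd u)) (at u)"
    using d_C1 by blast
  define p where "p = \<theta> k powr \<gamma>"
  have p: "0 < p"
    using AccBPGM1_step_size(1)[OF alg, of k] by (simp add: p_def)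
  have "f (x (Suc k)) - f w \<le> (1 - \<theta> k) * (f (x k) - f w)
      + p * (L * (bregman d Dd w (z k) - bregman d Dd w (z (Suc k)))) + \<delta>"
    using AccBPGM1_one_step_descent[OF Q(2) d_diff _ scaling orcl alg w] L
    by (simp add: p_def mult.assoc)
  then have "(f (x (Suc k)) - f w) / p \<le> ((1 - \<theta> k) * (f (x k) - f w)
      + p * (L * (bregman d Dd w (z k) - bregman d Dd w (z (Suc k)))) + \<delta>) / p"
    using p by (simp add: divide_right_mono)
  then show "1 / \<theta> k powr \<gamma> * (f (x (Suc k)) - f w) + L * bregman d Dd w (z (Suc k))
      \<le> (1 - \<theta> k) / \<theta> k powr \<gamma> * (f (x k) - f w) + L * bregman d Dd w (z k) + \<delta> / \<theta> k powr \<gamma>"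
    using p unfolding p_def[symmetric] by (simp add: add_divide_distrib right_diff_distrib[of L])
qed

end
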